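(* Let $n\ge 1$, let $R$ be a commutative ring, $\iota:\mu_n\to R^\times$ an injective group homomorphism (extended by $\iota(0)=0$), and $X\in R$ an $\mathbb{S}[\mu_{n,+}]$-generator of $R$. For $z=\sum_j\iota(\alpha_j)X^j\in R$ (its unique such decomposition) let $\deg(z)$ be the smallest integer $m$ such that $\alpha_j=0$ for all $j>m$. Then: (i) For $m\in\mathbb{N}$, let $J_m=X^mR$ be the ideal generated by $X^m$. Every $z\in R$ admits a unique decomposition $z=a+b$ with $\deg(a)<m$ (i.e. $a=\sum_{j<m}\iota(\alpha_j)X^j$) and $b\in J_m$. (ii) The quotient $R_m:=R/J_m$ is a finite ring whose elements are uniquely written as (the classes of) $\sum_{j=0}^{m-1}\iota(\alpha_j)X^j$ with $\alpha_j\in\mu_n\cup\{0\}$. (iii) The quotient $R_1=R/J_1$ is a finite field with $n+1$ elements, and $\iota:\mu_n\cup\{0\}\to R$ is a multiplicative section of the quotient map $R\to R_1$. (iv) The canonical ring homomorphism $\pi:R\to\varprojlim_m R_m$ is injective. (v) The pair $(R,X)$ is uniquely specified up to isomorphism by its hold $h$: precisely, if $(R',\iota',X')$ is another such triple (same $n$) whose hold equals the hold of $(R,\iota,X)$, then there is a ring isomorphism $\rho:R\to R'$ with $\rho(X)=X'$ and $\rho\circ\iota=\iota'$.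
   Context: $\mu_n$ is the group of $n$-th roots of unity, $\mu_{n,+}=\mu_n\cup\{0\}$. For a ring $A$ with injective homomorphism $\iota:\mu_n\to A^\times$ ($\iota(0):=0$), $X\in A$ is an $\mathbb{S}[\mu_{n,+}]$-generator if every $z\in A$ is uniquely a finite sum $\sum_j\iota(\alpha_j)X^j$, $\alpha_j\in\mu_n\cup\{0\}$. Let $\mathcal{P}(\mu_n)$ be the set of sequences $(\alpha_j)_{j\in\mathbb{N}}$ in $\mu_n\cup\{0\}$ with finitely many nonzero terms, and $\sigma:\mathcal{P}(\mu_n)\to A$, $\sigma((\alpha_j))=\sum_j\iota(\alpha_j)X^j$ (a bijection when $X$ is a generator). The hold of $(A,\iota,X)$ is the map $h:\mu_n\to\mathcal{P}(\mu_n)$ defined by $\sigma(h(\xi))=\iota(\xi)+1$ for $\xi\in\mu_n$. *)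

theory Defs
  imports Complex_Main "HOL-Algebra.Algebra"
begin

definition roots :: "nat \<Rightarrow> complex set" where
  "roots n = {z. z ^ n = 1}"

definition roots_plus :: "nat \<Rightarrow> complex set" where
  "roots_plus n = roots n \<union> {0}"

definition iota_p :: "('a, 'm) ring_scheme \<Rightarrow> (complex \<Rightarrow> 'a) \<Rightarrow> complex \<Rightarrow> 'a" where
  "iota_p R \<iota> \<alpha> = (if \<alpha> = 0 then \<zero>\<^bsub>R\<^esub> else \<iota> \<alpha>)"

definition Pseq :: "nat \<Rightarrow> (nat \<Rightarrow> complex) set" where
  "Pseq n = {\<alpha>. (\<forall>j. \<alpha> j \<in> roots_plus n) \<and> finite {j. \<alpha> j \<noteq> 0}}"

definition sigma :: "('a, 'm) ring_scheme \<Rightarrow> (complex \<Rightarrow> 'a) \<Rightarrow> 'a \<Rightarrow> (nat \<Rightarrow> complex) \<Rightarrow> 'a" where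
  "sigma R \<iota> T \<alpha> = (\<Oplus>\<^bsub>R\<^esub>j\<in>{j. \<alpha> j \<noteq> 0}. iota_p R \<iota> (\<alpha> j) \<otimes>\<^bsub>R\<^esub> T [^]\<^bsub>R\<^esub> j)"

definition is_generator :: "nat \<Rightarrow> ('a, 'm) ring_scheme \<Rightarrow> (complex \<Rightarrow> 'a) \<Rightarrow> 'a \<Rightarrow> bool" where
  "is_generator n R \<iota> T \<longleftrightarrow> T \<in> carrier R \<and>
     (\<forall>z \<in> carrier R. \<exists>!\<alpha>. \<alpha> \<in> Pseq n \<and> sigma R \<iota> T \<alpha> = z)"

definition setting :: "nat \<Rightarrow> ('a, 'm) ring_scheme \<Rightarrow> (complex \<Rightarrow> 'a) \<Rightarrow> 'a \<Rightarrow> bool" where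
  "setting n R \<iota> T \<longleftrightarrow> cring R \<and>
     \<iota> \<in> roots n \<rightarrow> Units R \<and> inj_on \<iota> (roots n) \<and>
     (\<forall>\<xi> \<in> roots n. \<forall>\<eta> \<in> roots n. \<iota> (\<xi> * \<eta>) = \<iota> \<xi> \<otimes>\<^bsub>R\<^esub> \<iota> \<eta>) \<and>
     is_generator n R \<iota> T"

definition coeffs :: "nat \<Rightarrow> ('a, 'm) ring_scheme \<Rightarrow> (complex \<Rightarrow> 'a) \<Rightarrow> 'a \<Rightarrow> 'a \<Rightarrow> (nat \<Rightarrow> complex)" where
  "coeffs n R \<iota> T z = (THE \<alpha>. \<alpha> \<in> Pseq n \<and> sigma R \<iota> T \<alpha> = z)"

definition deg_less :: "nat \<Rightarrow> ('a, 'm) ring_scheme \<Rightarrow> (complex \<Rightarrow> 'a) \<Rightarrow> 'a \<Rightarrow> 'a \<Rightarrow> nat \<Rightarrow> bool" where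
  "deg_less n R \<iota> T z m \<longleftrightarrow> (\<forall>j \<ge> m. coeffs n R \<iota> T z j = 0)"

definition hold :: "nat \<Rightarrow> ('a, 'm) ring_scheme \<Rightarrow> (complex \<Rightarrow> 'a) \<Rightarrow> 'a \<Rightarrow> complex \<Rightarrow> (nat \<Rightarrow> complex)" where
  "hold n R \<iota> T \<xi> = coeffs n R \<iota> T (\<iota> \<xi> \<oplus>\<^bsub>R\<^esub> \<one>\<^bsub>R\<^esub>)"

definition Jid :: "('a, 'm) ring_scheme \<Rightarrow> 'a \<Rightarrow> nat \<Rightarrow> 'a set" where
  "Jid R T m = {T [^]\<^bsub>R\<^esub> m \<otimes>\<^bsub>R\<^esub> r | r. r \<in> carrier R}"

text \<open>Carrier of the inverse limit of the R_m = R / J_m (compatible families of cosets).\<close>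
definition invlim :: "('a, 'm) ring_scheme \<Rightarrow> 'a \<Rightarrow> (nat \<Rightarrow> 'a set) set" where
  "invlim R T = {c. (\<forall>m. c m \<in> carrier (R Quot Jid R T m)) \<and>
       (\<forall>m. c (Suc m) \<subseteq> c m)}"

definition canon :: "('a, 'm) ring_scheme \<Rightarrow> 'a \<Rightarrow> 'a \<Rightarrow> nat \<Rightarrow> 'a set" where
  "canon R T z = (\<lambda>m. Jid R T m +>\<^bsub>R\<^esub> z)"

end

theory Submission
  imports Defs
begin

text \<open>The generator identifies \<open>R\<close> with finitely supported digit sequences in \<open>\<mu>\<^sub>n \<union> {0}\<close>,
  and every \<open>z\<close> splits uniquely as \<open>z = \<iota>(c) + X w\<close>, with \<open>c\<close> the lowest digit and \<open>w\<close> the shifted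
  tail. Iterating this splitting \<open>m\<close> times gives the unique decomposition modulo \<open>J\<^sub>m\<close>, hence
  the description of \<open>R\<^sub>m\<close>; for \<open>m = 1\<close> every nonzero digit is a unit, so \<open>J\<^sub>1\<close> is maximal. An element
  of every \<open>J\<^sub>m\<close> has no nonzero digit, so \<open>\<Inter>\<^sub>m J\<^sub>m = 0\<close> and \<open>R\<close> embeds into \<open>lim R\<^sub>m\<close>.

  For uniqueness, let \<open>\<rho>\<close> transport digits: \<open>\<rho>(\<Sum> \<iota>(\<alpha>\<^sub>j) X\<^sup>j) = \<Sum> \<iota>'(\<alpha>\<^sub>j) X'\<^sup>j\<close>. It respects
  the splitting, multiplication by \<open>\<iota>(\<xi>)\<close> (which just multiplies the digits), and, because the
  holds agree, sums of two digits: \<open>\<iota>(a) + \<iota>(b) = \<iota>(a) (\<iota>(b/a) + 1)\<close>. Splitting both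
  summands of \<open>x + y\<close> shows that the defect \<open>\<rho>(x + y) - \<rho>(x) - \<rho>(y)\<close> is \<open>X'\<close> times a sum of two
  defects, so by induction it lies in every \<open>J'\<^sub>m\<close>, hence vanishes; multiplicativity follows
  in the same way from additivity.\<close>

lemma roots_mult: "\<xi> \<in> roots n \<Longrightarrow> \<eta> \<in> roots n \<Longrightarrow> \<xi> * \<eta> \<in> roots n"
  by (simp add: roots_def power_mult_distrib)

lemma roots_divide: "\<xi> \<in> roots n \<Longrightarrow> \<eta> \<in> roots n \<Longrightarrow> \<eta> / \<xi> \<in> roots n"
  by (simp add: roots_def power_divide)

lemma one_in_roots: "1 \<in> roots n"
  by (simp add: roots_def)

lemma zero_notin_roots: "n \<ge> 1 \<Longrightarrow> 0 \<notin> roots n"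
  by (simp add: roots_def power_0_left)

lemma roots_plus_mult: "a \<in> roots_plus n \<Longrightarrow> b \<in> roots_plus n \<Longrightarrow> a * b \<in> roots_plus n"
  by (auto simp: roots_plus_def roots_mult)

lemma finite_roots_plus: "n \<ge> 1 \<Longrightarrow> finite (roots_plus n)"
  using finite_roots_unity[of n, where 'a = complex] by (simp add: roots_plus_def roots_def)

lemma card_roots_plus: "n \<ge> 1 \<Longrightarrow> card (roots_plus n) = n + 1"
  using finite_roots_plus[of n] card_roots_unity_eq[of n] zero_notin_roots[of n]
  by (simp add: roots_plus_def roots_def)

definition cons_seq :: "complex \<Rightarrow> (nat \<Rightarrow> complex) \<Rightarrow> nat \<Rightarrow> complex" where
  "cons_seq c \<beta> j = (case j of 0 \<Rightarrow> c | Suc k \<Rightarrow> \<beta> k)"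

lemma cons_seq_0 [simp]: "cons_seq c \<beta> 0 = c"
  and cons_seq_Suc [simp]: "cons_seq c \<beta> (Suc j) = \<beta> j"
  by (simp_all add: cons_seq_def)

lemma cons_seq_eq_iff: "cons_seq c \<beta> = cons_seq c' \<beta>' \<longleftrightarrow> c = c' \<and> \<beta> = \<beta>'"
proof
  assume "cons_seq c \<beta> = cons_seq c' \<beta>'"
  then have "\<forall>j. cons_seq c \<beta> j = cons_seq c' \<beta>' j"
    by simp
  then have "c = c'" "\<forall>j. \<beta> j = \<beta>' j"
    by (metis cons_seq_0, metis cons_seq_Suc)
  then show "c = c' \<and> \<beta> = \<beta>'"
    by auto
qed simp

lemma cons_seq_vanishes_from_Suc_iff:
  "(\<forall>j \<ge> Suc m. cons_seq c \<beta> j = 0) \<longleftrightarrow> (\<forall>j \<ge> m. \<beta> j = 0)"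
proof (intro iffI allI impI)
  fix j assume "\<forall>j \<ge> Suc m. cons_seq c \<beta> j = 0" "m \<le> j"
  then show "\<beta> j = 0"
    by (metis Suc_le_mono cons_seq_Suc)
next
  fix j assume "\<forall>j \<ge> m. \<beta> j = 0" "Suc m \<le> j"
  then show "cons_seq c \<beta> j = 0"
    by (cases j) auto
qed

lemma cons_seq_head_tail: "cons_seq (\<alpha> 0) (\<lambda>j. \<alpha> (Suc j)) = \<alpha>"
  by (rule ext) (simp add: cons_seq_def split: nat.split)

lemma zero_seq_in_Pseq: "(\<lambda>_. 0) \<in> Pseq n"
  by (simp add: Pseq_def roots_plus_def)

lemma Pseq_support_bounded: "\<alpha> \<in> Pseq n \<Longrightarrow> \<exists>N. {j. \<alpha> j \<noteq> 0} \<subseteq> {..N}"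
  by (auto simp: Pseq_def finite_nat_iff_bounded_le)

lemma cons_seq_in_Pseq:
  assumes "c \<in> roots_plus n" "\<beta> \<in> Pseq n"
  shows "cons_seq c \<beta> \<in> Pseq n"
proof -
  have "{j. cons_seq c \<beta> j \<noteq> 0} \<subseteq> insert 0 (Suc ` {j. \<beta> j \<noteq> 0})"
  proof
    fix j assume "j \<in> {j. cons_seq c \<beta> j \<noteq> 0}"
    then show "j \<in> insert 0 (Suc ` {j. \<beta> j \<noteq> 0})"
      by (cases j) auto
  qed
  then show ?thesis
    using assms by (auto simp: Pseq_def cons_seq_def split: nat.splits intro: finite_subset)
qed

lemma tail_in_Pseq:
  assumes "\<alpha> \<in> Pseq n"
  shows "(\<lambda>j. \<alpha> (Suc j)) \<in> Pseq n"
proof -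
  have "{j. \<alpha> (Suc j) \<noteq> 0} \<subseteq> (\<lambda>j. j - 1) ` {j. \<alpha> j \<noteq> 0}"
    by force
  from finite_subset[OF this] show ?thesis
    using assms by (simp add: Pseq_def)
qed

lemma scale_in_Pseq:
  assumes "n \<ge> 1" "\<xi> \<in> roots n" "\<alpha> \<in> Pseq n"
  shows "(\<lambda>j. \<xi> * \<alpha> j) \<in> Pseq n"
proof -
  have "\<xi> \<noteq> 0"
    using assms zero_notin_roots by blast
  then have "{j. \<xi> * \<alpha> j \<noteq> 0} = {j. \<alpha> j \<noteq> 0}"
    by simp
  moreover have "\<xi> * \<alpha> j \<in> roots_plus n" for j
    using roots_plus_mult[of \<xi> n "\<alpha> j"] assms by (simp add: roots_plus_def Pseq_def)
  ultimately show ?thesis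
    using assms by (simp add: Pseq_def)
qed

abbreviation Pseq_deg_less :: "nat \<Rightarrow> nat \<Rightarrow> (nat \<Rightarrow> complex) set" where
  "Pseq_deg_less n m \<equiv> {\<alpha> \<in> Pseq n. \<forall>j \<ge> m. \<alpha> j = 0}"

lemma finite_Pseq_deg_less:
  assumes "n \<ge> 1"
  shows "finite (Pseq_deg_less n m)"
proof (rule inj_on_finite)
  show "inj_on (\<lambda>\<alpha>. restrict \<alpha> {..<m}) (Pseq_deg_less n m)"
  proof (rule inj_onI, rule ext)
    fix \<alpha> \<beta> j
    assume "\<alpha> \<in> Pseq_deg_less n m" "\<beta> \<in> Pseq_deg_less n m"
      and "restrict \<alpha> {..<m} = restrict \<beta> {..<m}"
    then show "\<alpha> j = \<beta> j"
      by (cases "j < m") (auto dest: fun_cong[of _ _ j])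
  qed
  show "(\<lambda>\<alpha>. restrict \<alpha> {..<m}) ` Pseq_deg_less n m \<subseteq> PiE {..<m} (\<lambda>_. roots_plus n)"
    by (auto simp: Pseq_def split: if_splits)
  show "finite (PiE {..<m} (\<lambda>_. roots_plus n))"
    using assms by (simp add: finite_PiE finite_roots_plus)
qed

lemma (in ring) carrier_quotient_ring: "carrier (R Quot I) = (\<lambda>a. I +> a) ` carrier R"
  by (auto simp: FactRing_def A_RCOSETS_def')

locale adic_filtration = cring R for R :: "('a, 'm) ring_scheme" (structure) +
  fixes T :: 'a
  assumes T_closed: "T \<in> carrier R"
begin

lemma Jid_eq_PIdl: "Jid R T m = PIdl (T [^] m)"
  unfolding Jid_def cgenideal_def by (metis (no_types, lifting) T_closed m_comm nat_pow_closed)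

lemma Jid_ideal: "ideal (Jid R T m) R"
  unfolding Jid_eq_PIdl by (simp add: cgenideal_ideal T_closed)

lemma Jid_subset_carrier: "Jid R T m \<subseteq> carrier R"
  using T_closed by (auto simp: Jid_def)

lemma zero_in_Jid: "\<zero> \<in> Jid R T m"
  using additive_subgroup.zero_closed[OF ideal.axioms(1)[OF Jid_ideal]] .

lemma Jid_0: "Jid R T 0 = carrier R"
  by (force simp: Jid_def)

lemma Jid_Suc: "Jid R T (Suc m) = (\<lambda>y. T \<otimes> y) ` Jid R T m"
proof (intro equalityI subsetI)
  fix x assume "x \<in> Jid R T (Suc m)"
  then obtain r where "r \<in> carrier R" "x = T [^] Suc m \<otimes> r"
    by (auto simp: Jid_def)
  moreover have "T [^] m \<otimes> r \<in> Jid R T m"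
    using \<open>r \<in> carrier R\<close> unfolding Jid_def by blast
  ultimately show "x \<in> (\<lambda>y. T \<otimes> y) ` Jid R T m"
    by (simp add: m_ac T_closed)
next
  fix x assume "x \<in> (\<lambda>y. T \<otimes> y) ` Jid R T m"
  then obtain r where "r \<in> carrier R" "x = T \<otimes> (T [^] m \<otimes> r)"
    by (auto simp: Jid_def)
  then have "x = T [^] Suc m \<otimes> r"
    by (simp add: m_ac T_closed)
  with \<open>r \<in> carrier R\<close> show "x \<in> Jid R T (Suc m)"
    unfolding Jid_def by blast
qed

lemma T_mult_in_Jid_Suc: "y \<in> Jid R T m \<Longrightarrow> T \<otimes> y \<in> Jid R T (Suc m)"
  unfolding Jid_Suc by blast

lemma T_mult_add_in_Jid_Suc: "y \<in> Jid R T m \<Longrightarrow> y' \<in> Jid R T m \<Longrightarrow> T \<otimes> (y \<oplus> y') \<in> Jid R T (Suc m)"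
  by (intro T_mult_in_Jid_Suc additive_subgroup.a_closed[OF ideal.axioms(1)[OF Jid_ideal]])

lemma Jid_Suc_subset: "Jid R T (Suc m) \<subseteq> Jid R T m"
  unfolding Jid_Suc using Jid_ideal T_closed by (auto intro: ideal.I_l_closed)

lemma canon_in_invlim: "canon R T \<in> carrier R \<rightarrow> invlim R T"
proof
  fix z assume z: "z \<in> carrier R"
  have "Jid R T (Suc m) +> z \<subseteq> Jid R T m +> z" for m
    unfolding a_r_coset_def' using Jid_Suc_subset[of m] by blast
  then show "canon R T z \<in> invlim R T"
    unfolding canon_def invlim_def carrier_quotient_ring using z by blast
qed

end

locale mu_generator = adic_filtration R T for R :: "('a, 'm) ring_scheme" (structure) and T +
  fixes n :: nat and \<iota> :: "complex \<Rightarrow> 'a"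
  assumes n_pos: "1 \<le> n"
    and iota_units: "\<iota> \<in> Defs.roots n \<rightarrow> Units R"
    and iota_mult: "\<And>\<xi> \<eta>. \<xi> \<in> Defs.roots n \<Longrightarrow> \<eta> \<in> Defs.roots n \<Longrightarrow> \<iota> (\<xi> * \<eta>) = \<iota> \<xi> \<otimes> \<iota> \<eta>"
    and unique_digits: "\<And>z. z \<in> carrier R \<Longrightarrow> \<exists>!\<alpha>. \<alpha> \<in> Pseq n \<and> sigma R \<iota> T \<alpha> = z"
begin

abbreviation "\<iota>\<^sub>p \<equiv> iota_p R \<iota>"
abbreviation "sig \<equiv> sigma R \<iota> T"
abbreviation "digits \<equiv> coeffs n R \<iota> T"

lemma iota_closed: "\<xi> \<in> Defs.roots n \<Longrightarrow> \<iota> \<xi> \<in> carrier R"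
  using iota_units by blast

lemma iota_one: "\<iota> 1 = \<one>"
proof -
  have u: "\<iota> 1 \<in> Units R"
    using iota_units one_in_roots by blast
  then have "\<iota> 1 \<otimes> \<iota> 1 = \<iota> 1 \<otimes> \<one>"
    using iota_mult[OF one_in_roots one_in_roots] by auto
  then show ?thesis
    using u by (metis Units_closed Units_l_cancel one_closed)
qed

lemma iota_p_zero [simp]: "\<iota>\<^sub>p 0 = \<zero>"
  and iota_p_nonzero [simp]: "c \<noteq> 0 \<Longrightarrow> \<iota>\<^sub>p c = \<iota> c"
  by (simp_all add: iota_p_def)

lemma iota_p_closed: "c \<in> roots_plus n \<Longrightarrow> \<iota>\<^sub>p c \<in> carrier R"
  by (auto simp: iota_p_def roots_plus_def iota_closed)

lemma iota_p_mult: "a \<in> roots_plus n \<Longrightarrow> b \<in> roots_plus n \<Longrightarrow> \<iota>\<^sub>p (a * b) = \<iota>\<^sub>p a \<otimes> \<iota>\<^sub>p b"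
  by (auto simp: iota_p_def roots_plus_def iota_mult iota_closed)

lemma sigma_terms_closed: "\<alpha> \<in> Pseq n \<Longrightarrow> (\<lambda>j. \<iota>\<^sub>p (\<alpha> j) \<otimes> T [^] j) \<in> A \<rightarrow> carrier R"
  by (auto simp: Pseq_def intro!: iota_p_closed T_closed)

lemma sigma_closed: "\<alpha> \<in> Pseq n \<Longrightarrow> sig \<alpha> \<in> carrier R"
  unfolding sigma_def by (rule finsum_closed) (rule sigma_terms_closed)

lemma sigma_zero: "sig (\<lambda>_. 0) = \<zero>"
  by (simp add: sigma_def)

lemma sigma_eq_sum_atMost:
  assumes "\<alpha> \<in> Pseq n" "{j. \<alpha> j \<noteq> 0} \<subseteq> {..N}"
  shows "sig \<alpha> = (\<Oplus>j\<in>{..N}. \<iota>\<^sub>p (\<alpha> j) \<otimes> T [^] j)"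
  unfolding sigma_def
  by (rule add.finprod_mono_neutral_cong_left) (use assms sigma_terms_closed[OF assms(1)] T_closed in auto)

lemma sigma_cons_seq:
  assumes c: "c \<in> roots_plus n" and \<beta>: "\<beta> \<in> Pseq n"
  shows "sig (cons_seq c \<beta>) = \<iota>\<^sub>p c \<oplus> T \<otimes> sig \<beta>"
proof -
  obtain N where N: "{j. \<beta> j \<noteq> 0} \<subseteq> {..N}"
    using Pseq_support_bounded[OF \<beta>] by blast
  have N': "{j. cons_seq c \<beta> j \<noteq> 0} \<subseteq> {..Suc N}"
  proof
    fix j assume "j \<in> {j. cons_seq c \<beta> j \<noteq> 0}"
    then show "j \<in> {..Suc N}"
      using N by (cases j) auto
  qed
  have c\<beta>: "cons_seq c \<beta> \<in> Pseq n"
    by (rule cons_seq_in_Pseq[OF c \<beta>])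
  have "sig (cons_seq c \<beta>) = (\<Oplus>j\<in>{..N}. \<iota>\<^sub>p (\<beta> j) \<otimes> T [^] Suc j) \<oplus> \<iota>\<^sub>p c \<otimes> T [^] (0::nat)"
    using add.finprod_Suc2[OF sigma_terms_closed[OF c\<beta>], of N] sigma_eq_sum_atMost[OF c\<beta> N']
    by simp
  also have "(\<Oplus>j\<in>{..N}. \<iota>\<^sub>p (\<beta> j) \<otimes> T [^] Suc j) = (\<Oplus>j\<in>{..N}. T \<otimes> (\<iota>\<^sub>p (\<beta> j) \<otimes> T [^] j))"
    using \<beta> by (intro add.finprod_cong') (auto simp: Pseq_def m_ac iota_p_closed T_closed)
  also have "\<dots> = T \<otimes> sig \<beta>"
    unfolding sigma_eq_sum_atMost[OF \<beta> N]
    by (rule finsum_rdistr[symmetric]) (use T_closed sigma_terms_closed[OF \<beta>] in auto)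
  finally show ?thesis
    using c \<beta> iota_p_closed sigma_closed T_closed by (simp add: a_comm)
qed

lemma digits_sigma: "\<alpha> \<in> Pseq n \<Longrightarrow> digits (sig \<alpha>) = \<alpha>"
  unfolding coeffs_def by (rule the1_equality) (simp_all add: unique_digits sigma_closed)

lemma inj_on_sigma: "inj_on sig (Pseq n)"
  by (rule inj_on_inverseI[of _ digits]) (rule digits_sigma)

lemma digits_closed: "z \<in> carrier R \<Longrightarrow> digits z \<in> Pseq n"
  and sigma_digits: "z \<in> carrier R \<Longrightarrow> sig (digits z) = z"
  unfolding coeffs_def using theI'[OF unique_digits] by simp_all

lemma digits_zero: "digits \<zero> = (\<lambda>_. 0)"
  using digits_sigma[OF zero_seq_in_Pseq] sigma_zero by simp

lemma digits_head:
  "c \<in> roots_plus n \<Longrightarrow> w \<in> carrier R \<Longrightarrow> digits (\<iota>\<^sub>p c \<oplus> T \<otimes> w) = cons_seq c (digits w)"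
  using sigma_cons_seq[OF _ digits_closed, of c w] sigma_digits[of w]
    digits_sigma[OF cons_seq_in_Pseq[OF _ digits_closed, of c w]] by simp

lemma sigma_scale:
  assumes \<xi>: "\<xi> \<in> Defs.roots n" and \<alpha>: "\<alpha> \<in> Pseq n"
  shows "sig (\<lambda>j. \<xi> * \<alpha> j) = \<iota> \<xi> \<otimes> sig \<alpha>"
proof -
  have "\<xi> \<noteq> 0"
    using \<xi> zero_notin_roots n_pos by blast
  then have "sig (\<lambda>j. \<xi> * \<alpha> j) = (\<Oplus>j\<in>{j. \<alpha> j \<noteq> 0}. \<iota> \<xi> \<otimes> (\<iota>\<^sub>p (\<alpha> j) \<otimes> T [^] j))"
    unfolding sigma_def using \<xi> \<alpha> iota_p_mult[of \<xi> "\<alpha> _"] iota_closed iota_p_closed T_closed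
    by (intro add.finprod_cong') (auto simp: Pseq_def roots_plus_def m_assoc)
  also have "\<dots> = \<iota> \<xi> \<otimes> sig \<alpha>"
    unfolding sigma_def using \<alpha> iota_closed[OF \<xi>] sigma_terms_closed[OF \<alpha>]
    by (intro finsum_rdistr[symmetric]) (auto simp: Pseq_def)
  finally show ?thesis .
qed

lemma digits_scale:
  assumes "\<xi> \<in> Defs.roots n" "z \<in> carrier R"
  shows "digits (\<iota> \<xi> \<otimes> z) = (\<lambda>j. \<xi> * digits z j)"
proof -
  have "\<iota> \<xi> \<otimes> z = sig (\<lambda>j. \<xi> * digits z j)"
    using sigma_scale[OF assms(1) digits_closed[OF assms(2)]] sigma_digits[OF assms(2)] by simp
  then show ?thesis
    using digits_sigma[OF scale_in_Pseq[OF n_pos assms(1) digits_closed[OF assms(2)]]] by simp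
qed

lemma head_decomposition:
  assumes z: "z \<in> carrier R"
  obtains c w where "c \<in> roots_plus n" "w \<in> carrier R" "z = \<iota>\<^sub>p c \<oplus> T \<otimes> w"
proof
  have \<alpha>: "digits z \<in> Pseq n"
    by (rule digits_closed[OF z])
  show head: "digits z 0 \<in> roots_plus n"
    using \<alpha> by (simp add: Pseq_def)
  have tail: "(\<lambda>j. digits z (Suc j)) \<in> Pseq n"
    using \<alpha> by (rule tail_in_Pseq)
  then show "sig (\<lambda>j. digits z (Suc j)) \<in> carrier R"
    by (rule sigma_closed)
  show "z = \<iota>\<^sub>p (digits z 0) \<oplus> T \<otimes> sig (\<lambda>j. digits z (Suc j))"
    using sigma_cons_seq[OF head tail] by (simp add: cons_seq_head_tail sigma_digits z)
qed

lemma head_decomposition_unique: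
  assumes "c \<in> roots_plus n" "c' \<in> roots_plus n" "w \<in> carrier R" "w' \<in> carrier R"
    and "\<iota>\<^sub>p c \<oplus> T \<otimes> w = \<iota>\<^sub>p c' \<oplus> T \<otimes> w'"
  shows "c = c'" "w = w'"
proof -
  have "cons_seq c (digits w) = digits (\<iota>\<^sub>p c \<oplus> T \<otimes> w)"
    using digits_head[OF assms(1,3)] by (rule sym)
  also have "\<dots> = cons_seq c' (digits w')"
    unfolding assms(5) by (rule digits_head[OF assms(2,4)])
  finally have "c = c'" and digits_eq: "digits w = digits w'"
    by (simp_all add: cons_seq_eq_iff)
  then show "c = c'"
    by simp
  show "w = w'"
    using sigma_digits[OF assms(3)] sigma_digits[OF assms(4)] digits_eq by metis
qed

lemma deg_less_0_iff:
  assumes "z \<in> carrier R"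
  shows "deg_less n R \<iota> T z 0 \<longleftrightarrow> z = \<zero>"
proof
  assume "deg_less n R \<iota> T z 0"
  then have "digits z = (\<lambda>_. 0)"
    by (auto simp: deg_less_def)
  then show "z = \<zero>"
    using sigma_digits[OF assms] sigma_zero by simp
qed (simp add: deg_less_def digits_zero)

lemma deg_less_head_Suc_iff:
  assumes "c \<in> roots_plus n" "w \<in> carrier R"
  shows "deg_less n R \<iota> T (\<iota>\<^sub>p c \<oplus> T \<otimes> w) (Suc m) \<longleftrightarrow> deg_less n R \<iota> T w m"
  unfolding deg_less_def digits_head[OF assms] by (rule cons_seq_vanishes_from_Suc_iff)

lemma deg_less_sigma: "\<alpha> \<in> Pseq n \<Longrightarrow> \<forall>j \<ge> m. \<alpha> j = 0 \<Longrightarrow> deg_less n R \<iota> T (sig \<alpha>) m"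
  by (simp add: deg_less_def digits_sigma)

lemma truncation_exists:
  "z \<in> carrier R \<Longrightarrow> \<exists>a b. a \<in> carrier R \<and> b \<in> Jid R T m \<and> z = a \<oplus> b \<and> deg_less n R \<iota> T a m"
proof (induction m arbitrary: z)
  case 0
  then show ?case
    by (intro exI[of _ \<zero>] exI[of _ z]) (simp add: Jid_0 deg_less_0_iff)
next
  case (Suc m)
  obtain c w where cw: "c \<in> roots_plus n" "w \<in> carrier R" "z = \<iota>\<^sub>p c \<oplus> T \<otimes> w"
    using head_decomposition[OF Suc.prems] by blast
  obtain a b where ab: "a \<in> carrier R" "b \<in> Jid R T m" "w = a \<oplus> b" "deg_less n R \<iota> T a m"
    using Suc.IH[OF cw(2)] by blast
  have "b \<in> carrier R"
    using ab(2) Jid_subset_carrier by blast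
  then have "z = (\<iota>\<^sub>p c \<oplus> T \<otimes> a) \<oplus> T \<otimes> b"
    using cw ab iota_p_closed T_closed by (simp add: r_distr a_assoc)
  moreover have "deg_less n R \<iota> T (\<iota>\<^sub>p c \<oplus> T \<otimes> a) (Suc m)"
    using deg_less_head_Suc_iff cw ab by blast
  moreover have "\<iota>\<^sub>p c \<oplus> T \<otimes> a \<in> carrier R" "T \<otimes> b \<in> Jid R T (Suc m)"
    using ab cw iota_p_closed T_closed T_mult_in_Jid_Suc by simp_all
  ultimately show ?case
    by blast
qed

lemma truncation_unique:
  "a \<in> carrier R \<Longrightarrow> a' \<in> carrier R \<Longrightarrow> b \<in> Jid R T m \<Longrightarrow> b' \<in> Jid R T m \<Longrightarrow>
   a \<oplus> b = a' \<oplus> b' \<Longrightarrow> deg_less n R \<iota> T a m \<Longrightarrow> deg_less n R \<iota> T a' m \<Longrightarrow> a = a' \<and> b = b'"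
proof (induction m arbitrary: a b a' b')
  case 0
  then have "a = \<zero>" "a' = \<zero>" "b \<in> carrier R" "b' \<in> carrier R"
    using deg_less_0_iff by (simp_all add: Jid_0)
  then show ?case
    using 0(5) by simp
next
  case (Suc m)
  obtain c w where cw: "c \<in> roots_plus n" "w \<in> carrier R" "a = \<iota>\<^sub>p c \<oplus> T \<otimes> w"
    using head_decomposition[OF Suc.prems(1)] by blast
  obtain c' w' where cw': "c' \<in> roots_plus n" "w' \<in> carrier R" "a' = \<iota>\<^sub>p c' \<oplus> T \<otimes> w'"
    using head_decomposition[OF Suc.prems(2)] by blast
  obtain y y' where y: "y \<in> Jid R T m" "b = T \<otimes> y" "y' \<in> Jid R T m" "b' = T \<otimes> y'"
    using Suc.prems(3,4) unfolding Jid_Suc by blast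
  then have y_closed: "y \<in> carrier R" "y' \<in> carrier R"
    using Jid_subset_carrier by auto
  have "\<iota>\<^sub>p c \<oplus> T \<otimes> (w \<oplus> y) = a \<oplus> b"
    using cw y y_closed iota_p_closed T_closed by (simp add: r_distr a_assoc)
  also have "\<dots> = a' \<oplus> b'"
    by (rule Suc.prems(5))
  also have "\<dots> = \<iota>\<^sub>p c' \<oplus> T \<otimes> (w' \<oplus> y')"
    using cw' y y_closed iota_p_closed T_closed by (simp add: r_distr a_assoc)
  finally have "\<iota>\<^sub>p c \<oplus> T \<otimes> (w \<oplus> y) = \<iota>\<^sub>p c' \<oplus> T \<otimes> (w' \<oplus> y')" .
  moreover have "w \<oplus> y \<in> carrier R" "w' \<oplus> y' \<in> carrier R"
    using cw cw' y_closed by simp_all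
  ultimately have "c = c'" "w \<oplus> y = w' \<oplus> y'"
    using head_decomposition_unique[OF cw(1) cw'(1)] by blast+
  moreover have "deg_less n R \<iota> T w m" "deg_less n R \<iota> T w' m"
    using deg_less_head_Suc_iff cw cw' Suc.prems(6,7) by simp_all
  ultimately show ?case
    using Suc.IH[OF cw(2) cw'(2) y(1) y(3)] cw cw' y by simp
qed

lemma unique_truncation:
  assumes "z \<in> carrier R"
  shows "\<exists>a b. a \<in> carrier R \<and> b \<in> Jid R T m \<and> z = a \<oplus> b \<and> deg_less n R \<iota> T a m \<and>
    (\<forall>a' b'. a' \<in> carrier R \<and> b' \<in> Jid R T m \<and> z = a' \<oplus> b' \<and> deg_less n R \<iota> T a' m
       \<longrightarrow> a' = a \<and> b' = b)"
proof -
  obtain a b where ab: "a \<in> carrier R" "b \<in> Jid R T m" "z = a \<oplus> b" "deg_less n R \<iota> T a m"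
    using truncation_exists[OF assms] by blast
  moreover have "a' = a \<and> b' = b"
    if "a' \<in> carrier R \<and> b' \<in> Jid R T m \<and> z = a' \<oplus> b' \<and> deg_less n R \<iota> T a' m" for a' b'
    using truncation_unique[of a' a b' m b] that ab by auto
  ultimately show ?thesis
    by blast
qed

lemma bij_Pseq_deg_less_quotient:
  "bij_betw (\<lambda>\<alpha>. Jid R T m +> sig \<alpha>) (Pseq_deg_less n m) (carrier (R Quot Jid R T m))"
proof (rule bij_betw_imageI)
  show "inj_on (\<lambda>\<alpha>. Jid R T m +> sig \<alpha>) (Pseq_deg_less n m)"
  proof (rule inj_onI)
    fix \<alpha> \<beta>
    assume \<alpha>: "\<alpha> \<in> Pseq_deg_less n m" and \<beta>: "\<beta> \<in> Pseq_deg_less n m"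
      and eq: "Jid R T m +> sig \<alpha> = Jid R T m +> sig \<beta>"
    have closed: "sig \<alpha> \<in> carrier R" "sig \<beta> \<in> carrier R"
      using \<alpha> \<beta> sigma_closed by auto
    have diff: "sig \<alpha> \<ominus> sig \<beta> \<in> Jid R T m"
      using eq by (rule quotient_eq_iff_same_a_r_cos[OF Jid_ideal closed, THEN iffD2])
    have "sig \<alpha> \<oplus> \<zero> = sig \<beta> \<oplus> (sig \<alpha> \<ominus> sig \<beta>)"
      using closed by algebra
    then have "sig \<alpha> = sig \<beta>"
      using truncation_unique[OF closed zero_in_Jid diff] deg_less_sigma \<alpha> \<beta> by simp
    then show "\<alpha> = \<beta>"
      by (rule inj_onD[OF inj_on_sigma]) (use \<alpha> \<beta> in simp_all)
  qed
  show "(\<lambda>\<alpha>. Jid R T m +> sig \<alpha>) ` Pseq_deg_less n m = carrier (R Quot Jid R T m)"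
  proof (intro equalityI subsetI)
    fix Y assume "Y \<in> (\<lambda>\<alpha>. Jid R T m +> sig \<alpha>) ` Pseq_deg_less n m"
    then show "Y \<in> carrier (R Quot Jid R T m)"
      unfolding carrier_quotient_ring using sigma_closed by auto
  next
    fix Y assume "Y \<in> carrier (R Quot Jid R T m)"
    then obtain z where z: "z \<in> carrier R" "Y = Jid R T m +> z"
      unfolding carrier_quotient_ring by blast
    obtain a b where ab: "a \<in> carrier R" "b \<in> Jid R T m" "z = a \<oplus> b" "deg_less n R \<iota> T a m"
      using truncation_exists[OF z(1)] by blast
    have "b \<in> carrier R"
      using ab(2) Jid_subset_carrier by blast
    then have "z \<ominus> a = b"
      unfolding ab(3) using ab(1) by algebra
    then have "z \<ominus> a \<in> Jid R T m"
      using ab(2) by simp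
    then have "Jid R T m +> z = Jid R T m +> a"
      by (rule quotient_eq_iff_same_a_r_cos[OF Jid_ideal z(1) ab(1), THEN iffD1])
    then have "Y = Jid R T m +> sig (digits a)"
      using z(2) sigma_digits[OF ab(1)] by simp
    moreover have "digits a \<in> Pseq_deg_less n m"
      using digits_closed[OF ab(1)] ab(4) by (simp add: deg_less_def)
    ultimately show "Y \<in> (\<lambda>\<alpha>. Jid R T m +> sig \<alpha>) ` Pseq_deg_less n m"
      by (rule image_eqI)
  qed
qed

lemma finite_quotient: "finite (carrier (R Quot Jid R T m))"
  using bij_betw_finite[OF bij_Pseq_deg_less_quotient] finite_Pseq_deg_less[OF n_pos] by blast

lemma one_notin_Jid_1: "\<one> \<notin> Jid R T 1"
proof
  assume "\<one> \<in> Jid R T 1"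
  then obtain y where y: "y \<in> carrier R" "\<one> = T \<otimes> y"
    using Jid_Suc[of 0] Jid_0 by auto
  then have "\<iota>\<^sub>p 1 \<oplus> T \<otimes> \<zero> = \<iota>\<^sub>p 0 \<oplus> T \<otimes> y"
    using T_closed by (simp add: iota_one)
  then have "(1::complex) = 0"
    using head_decomposition_unique(1)[of 1 0 \<zero> y] y by (simp add: roots_plus_def one_in_roots)
  then show False
    by simp
qed

lemma maximalideal_Jid_1: "maximalideal (Jid R T 1) R"
proof (rule maximalidealI)
  show "ideal (Jid R T 1) R"
    by (rule Jid_ideal)
  show "carrier R \<noteq> Jid R T 1"
    using one_notin_Jid_1 by auto
next
  fix K assume K: "ideal K R" "Jid R T 1 \<subseteq> K" "K \<subseteq> carrier R"
  show "K = Jid R T 1 \<or> K = carrier R"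
  proof (cases "K \<subseteq> Jid R T 1")
    case True
    then show ?thesis
      using K by blast
  next
    case False
    then obtain z where z: "z \<in> K" "z \<notin> Jid R T 1"
      by blast
    obtain c w where cw: "c \<in> roots_plus n" "w \<in> carrier R" "z = \<iota>\<^sub>p c \<oplus> T \<otimes> w"
      using head_decomposition z K by blast
    have Tw: "T \<otimes> w \<in> Jid R T 1"
      using T_mult_in_Jid_Suc[of w 0] cw(2) by (simp add: Jid_0)
    have c: "c \<noteq> 0"
      using z Tw cw T_closed by auto
    have "\<iota>\<^sub>p c = z \<ominus> T \<otimes> w"
      using cw T_closed iota_p_closed by algebra
    moreover have "z \<ominus> T \<otimes> w \<in> K"
      using K z Tw by (simp add: a_minus_def ideal.axioms(1) additive_subgroup.a_closed
          additive_subgroup.a_inv_closed subsetD)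
    ultimately have "\<iota> c \<in> K"
      using c by simp
    moreover have "\<iota> c \<in> Units R"
      using iota_units cw(1) c by (auto simp: roots_plus_def)
    ultimately have "\<one> \<in> K"
      using ideal.I_l_closed[OF K(1), of "\<iota> c" "inv (\<iota> c)"] by simp
    then show ?thesis
      using ideal.one_imp_carrier[OF K(1)] by blast
  qed
qed

lemma bij_roots_plus_quotient_1:
  "bij_betw (\<lambda>c. Jid R T 1 +> \<iota>\<^sub>p c) (roots_plus n) (carrier (R Quot Jid R T 1))"
proof -
  have "bij_betw (\<lambda>c. cons_seq c (\<lambda>_. 0)) (roots_plus n) (Pseq_deg_less n 1)"
  proof (rule bij_betwI')
    show "cons_seq c (\<lambda>_. 0) = cons_seq c' (\<lambda>_. 0) \<longleftrightarrow> c = c'" for c c'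
      by (simp add: cons_seq_eq_iff)
    show "cons_seq c (\<lambda>_. 0) \<in> Pseq_deg_less n 1" if "c \<in> roots_plus n" for c
      using that cons_seq_in_Pseq[OF that zero_seq_in_Pseq] by (auto simp: cons_seq_def split: nat.split)
    show "\<exists>c \<in> roots_plus n. \<alpha> = cons_seq c (\<lambda>_. 0)" if "\<alpha> \<in> Pseq_deg_less n 1" for \<alpha>
      using that by (intro bexI[of _ "\<alpha> 0"] ext) (auto simp: Pseq_def cons_seq_def split: nat.split)
  qed
  from bij_betw_trans[OF this bij_Pseq_deg_less_quotient]
  have "bij_betw (\<lambda>c. Jid R T 1 +> sig (cons_seq c (\<lambda>_. 0))) (roots_plus n) (carrier (R Quot Jid R T 1))"
    by (simp add: comp_def)
  moreover have "sig (cons_seq c (\<lambda>_. 0)) = \<iota>\<^sub>p c" if "c \<in> roots_plus n" for c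
    using sigma_cons_seq[OF that zero_seq_in_Pseq] iota_p_closed[OF that] T_closed by (simp add: sigma_zero)
  ultimately show ?thesis
    using bij_betw_cong[of "roots_plus n" "\<lambda>c. Jid R T 1 +> sig (cons_seq c (\<lambda>_. 0))"
        "\<lambda>c. Jid R T 1 +> \<iota>\<^sub>p c"] by simp
qed

lemma field_quotient_Jid_1: "field (R Quot Jid R T 1)"
  by (rule maximalideal.quotient_is_field[OF maximalideal_Jid_1 is_cring])

lemma card_quotient_Jid_1: "card (carrier (R Quot Jid R T 1)) = n + 1"
  using bij_betw_same_card[OF bij_roots_plus_quotient_1] card_roots_plus[OF n_pos] by simp

lemma Inter_Jid: "(\<Inter>m. Jid R T m) = {\<zero>}"
proof (intro equalityI subsetI)
  fix w assume w: "w \<in> (\<Inter>m. Jid R T m)"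
  then have w_closed: "w \<in> carrier R"
    using Jid_subset_carrier by blast
  obtain N where "{j. digits w j \<noteq> 0} \<subseteq> {..N}"
    using Pseq_support_bounded[OF digits_closed[OF w_closed]] by blast
  then have "deg_less n R \<iota> T w (Suc N)"
    by (auto simp: deg_less_def)
  moreover have "deg_less n R \<iota> T \<zero> (Suc N)"
    by (simp add: deg_less_def digits_zero)
  moreover have "w \<in> Jid R T (Suc N)" "w \<oplus> \<zero> = \<zero> \<oplus> w"
    using w w_closed by auto
  ultimately show "w \<in> {\<zero>}"
    using truncation_unique[OF w_closed zero_closed zero_in_Jid] by blast
qed (simp add: zero_in_Jid)

lemma eq_if_diff_in_all_Jid:
  assumes "x \<in> carrier R" "y \<in> carrier R" "\<And>m. x \<ominus> y \<in> Jid R T m"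
  shows "x = y"
proof -
  have "x \<ominus> y \<in> (\<Inter>m. Jid R T m)"
    using assms(3) by blast
  then show ?thesis
    using assms(1,2) by (simp add: Inter_Jid r_right_minus_eq)
qed

lemma inj_on_canon: "inj_on (canon R T) (carrier R)"
proof (rule inj_onI)
  fix x y assume x: "x \<in> carrier R" and y: "y \<in> carrier R" and eq: "canon R T x = canon R T y"
  have "x \<ominus> y \<in> Jid R T m" for m
    using fun_cong[OF eq, of m] unfolding canon_def
    by (rule quotient_eq_iff_same_a_r_cos[OF Jid_ideal x y, THEN iffD2])
  then show "x = y"
    using eq_if_diff_in_all_Jid x y by blast
qed

end

locale mu_generator_pair = A: mu_generator R T n \<iota> + B: mu_generator R' T' n \<iota>'
  for R :: "('a, 'm) ring_scheme" and T n \<iota> and R' :: "('b, 'c) ring_scheme" and T' \<iota>' +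
  assumes hold_eq: "\<And>\<xi>. \<xi> \<in> Defs.roots n \<Longrightarrow> hold n R' \<iota>' T' \<xi> = hold n R \<iota> T \<xi>"
begin

definition transport :: "'a \<Rightarrow> 'b" where
  "transport z = B.sig (A.digits z)"

lemma transport_closed: "z \<in> carrier R \<Longrightarrow> transport z \<in> carrier R'"
  unfolding transport_def using A.digits_closed B.sigma_closed by blast

lemma transport_head:
  "c \<in> roots_plus n \<Longrightarrow> w \<in> carrier R \<Longrightarrow>
   transport (A.\<iota>\<^sub>p c \<oplus>\<^bsub>R\<^esub> T \<otimes>\<^bsub>R\<^esub> w) = B.\<iota>\<^sub>p c \<oplus>\<^bsub>R'\<^esub> T' \<otimes>\<^bsub>R'\<^esub> transport w"
  unfolding transport_def by (simp add: A.digits_head B.sigma_cons_seq A.digits_closed)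

lemma transport_zero: "transport \<zero>\<^bsub>R\<^esub> = \<zero>\<^bsub>R'\<^esub>"
  unfolding transport_def A.digits_zero B.sigma_zero ..

lemma transport_iota_p: "c \<in> roots_plus n \<Longrightarrow> transport (A.\<iota>\<^sub>p c) = B.\<iota>\<^sub>p c"
  using transport_head[of c "\<zero>\<^bsub>R\<^esub>"] A.iota_p_closed B.iota_p_closed A.T_closed B.T_closed
  by (simp add: transport_zero)

lemma transport_T_mult: "w \<in> carrier R \<Longrightarrow> transport (T \<otimes>\<^bsub>R\<^esub> w) = T' \<otimes>\<^bsub>R'\<^esub> transport w"
  using transport_head[of 0 w] A.T_closed B.T_closed transport_closed
  by (simp add: roots_plus_def)

lemma transport_one: "transport \<one>\<^bsub>R\<^esub> = \<one>\<^bsub>R'\<^esub>"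
  using transport_iota_p[of 1] A.iota_one B.iota_one by (simp add: roots_plus_def one_in_roots)

lemma transport_scale:
  "\<xi> \<in> Defs.roots n \<Longrightarrow> z \<in> carrier R \<Longrightarrow> transport (\<iota> \<xi> \<otimes>\<^bsub>R\<^esub> z) = \<iota>' \<xi> \<otimes>\<^bsub>R'\<^esub> transport z"
  unfolding transport_def by (simp add: A.digits_scale B.sigma_scale A.digits_closed)

lemma transport_iota_p_mult:
  "a \<in> roots_plus n \<Longrightarrow> z \<in> carrier R \<Longrightarrow> transport (A.\<iota>\<^sub>p a \<otimes>\<^bsub>R\<^esub> z) = B.\<iota>\<^sub>p a \<otimes>\<^bsub>R'\<^esub> transport z"
  by (cases "a = 0") (auto simp: roots_plus_def transport_zero transport_closed transport_scale)

lemma transport_iota_plus_one: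
  assumes "\<xi> \<in> Defs.roots n"
  shows "transport (\<iota> \<xi> \<oplus>\<^bsub>R\<^esub> \<one>\<^bsub>R\<^esub>) = \<iota>' \<xi> \<oplus>\<^bsub>R'\<^esub> \<one>\<^bsub>R'\<^esub>"
proof -
  have "transport (\<iota> \<xi> \<oplus>\<^bsub>R\<^esub> \<one>\<^bsub>R\<^esub>) = B.sig (hold n R \<iota> T \<xi>)"
    unfolding transport_def hold_def ..
  also have "\<dots> = B.sig (hold n R' \<iota>' T' \<xi>)"
    by (simp only: hold_eq[OF assms])
  also have "\<dots> = \<iota>' \<xi> \<oplus>\<^bsub>R'\<^esub> \<one>\<^bsub>R'\<^esub>"
    unfolding hold_def using B.iota_closed[OF assms] by (simp add: B.sigma_digits)
  finally show ?thesis .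
qed

lemma transport_iota_p_add:
  assumes a: "a \<in> roots_plus n" and b: "b \<in> roots_plus n"
  shows "transport (A.\<iota>\<^sub>p a \<oplus>\<^bsub>R\<^esub> A.\<iota>\<^sub>p b) = B.\<iota>\<^sub>p a \<oplus>\<^bsub>R'\<^esub> B.\<iota>\<^sub>p b"
proof (cases "a = 0 \<or> b = 0")
  case True
  then show ?thesis
    using transport_iota_p a b A.iota_p_closed B.iota_p_closed by auto
next
  case False
  then have a': "a \<in> Defs.roots n" and b': "b \<in> Defs.roots n"
    using a b by (auto simp: roots_plus_def)
  define q where "q = b / a"
  have q: "q \<in> Defs.roots n" and "b = a * q"
    using roots_divide[OF a' b'] False by (simp_all add: q_def)
  then have \<iota>_b: "\<iota> b = \<iota> a \<otimes>\<^bsub>R\<^esub> \<iota> q" and \<iota>'_b: "\<iota>' b = \<iota>' a \<otimes>\<^bsub>R'\<^esub> \<iota>' q"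
    using A.iota_mult B.iota_mult a' by simp_all
  have "A.\<iota>\<^sub>p a \<oplus>\<^bsub>R\<^esub> A.\<iota>\<^sub>p b = \<iota> a \<oplus>\<^bsub>R\<^esub> \<iota> a \<otimes>\<^bsub>R\<^esub> \<iota> q"
    using False \<iota>_b by simp
  also have "\<dots> = \<iota> a \<otimes>\<^bsub>R\<^esub> (\<iota> q \<oplus>\<^bsub>R\<^esub> \<one>\<^bsub>R\<^esub>)"
    using A.iota_closed[OF a'] A.iota_closed[OF q] by algebra
  finally have "transport (A.\<iota>\<^sub>p a \<oplus>\<^bsub>R\<^esub> A.\<iota>\<^sub>p b) = \<iota>' a \<otimes>\<^bsub>R'\<^esub> (\<iota>' q \<oplus>\<^bsub>R'\<^esub> \<one>\<^bsub>R'\<^esub>)"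
    using transport_scale[OF a'] transport_iota_plus_one[OF q] A.iota_closed[OF q] by simp
  also have "\<dots> = \<iota>' a \<oplus>\<^bsub>R'\<^esub> \<iota>' a \<otimes>\<^bsub>R'\<^esub> \<iota>' q"
    using B.iota_closed[OF a'] B.iota_closed[OF q] by algebra
  also have "\<dots> = B.\<iota>\<^sub>p a \<oplus>\<^bsub>R'\<^esub> B.\<iota>\<^sub>p b"
    using False \<iota>'_b by simp
  finally show ?thesis .
qed

lemma transport_add_mod_Jid:
  "x \<in> carrier R \<Longrightarrow> y \<in> carrier R \<Longrightarrow>
   transport (x \<oplus>\<^bsub>R\<^esub> y) \<ominus>\<^bsub>R'\<^esub> (transport x \<oplus>\<^bsub>R'\<^esub> transport y) \<in> Jid R' T' m"
proof (induction m arbitrary: x y)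
  case 0
  then show ?case
    using transport_closed by (simp add: B.Jid_0)
next
  case (Suc m)
  obtain a x1 where x: "a \<in> roots_plus n" "x1 \<in> carrier R" "x = A.\<iota>\<^sub>p a \<oplus>\<^bsub>R\<^esub> T \<otimes>\<^bsub>R\<^esub> x1"
    using A.head_decomposition[OF Suc.prems(1)] by blast
  obtain b y1 where y: "b \<in> roots_plus n" "y1 \<in> carrier R" "y = A.\<iota>\<^sub>p b \<oplus>\<^bsub>R\<^esub> T \<otimes>\<^bsub>R\<^esub> y1"
    using A.head_decomposition[OF Suc.prems(2)] by blast
  have "A.\<iota>\<^sub>p a \<oplus>\<^bsub>R\<^esub> A.\<iota>\<^sub>p b \<in> carrier R"
    using A.iota_p_closed x(1) y(1) by simp
  then obtain c w where carry: "c \<in> roots_plus n" "w \<in> carrier R"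
    "A.\<iota>\<^sub>p a \<oplus>\<^bsub>R\<^esub> A.\<iota>\<^sub>p b = A.\<iota>\<^sub>p c \<oplus>\<^bsub>R\<^esub> T \<otimes>\<^bsub>R\<^esub> w"
    by (rule A.head_decomposition)
  have x1y1: "x1 \<oplus>\<^bsub>R\<^esub> y1 \<in> carrier R" and wx1y1: "w \<oplus>\<^bsub>R\<^esub> (x1 \<oplus>\<^bsub>R\<^esub> y1) \<in> carrier R"
    using x y carry by simp_all
  have "x \<oplus>\<^bsub>R\<^esub> y = (A.\<iota>\<^sub>p a \<oplus>\<^bsub>R\<^esub> A.\<iota>\<^sub>p b) \<oplus>\<^bsub>R\<^esub> T \<otimes>\<^bsub>R\<^esub> (x1 \<oplus>\<^bsub>R\<^esub> y1)"
    unfolding x(3) y(3) using A.iota_p_closed[OF x(1)] A.iota_p_closed[OF y(1)] x(2) y(2) A.T_closed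
    by algebra
  also have "\<dots> = A.\<iota>\<^sub>p c \<oplus>\<^bsub>R\<^esub> T \<otimes>\<^bsub>R\<^esub> (w \<oplus>\<^bsub>R\<^esub> (x1 \<oplus>\<^bsub>R\<^esub> y1))"
    unfolding carry(3) using A.iota_p_closed[OF carry(1)] carry(2) x1y1 A.T_closed by algebra
  finally have sum: "transport (x \<oplus>\<^bsub>R\<^esub> y) = B.\<iota>\<^sub>p c \<oplus>\<^bsub>R'\<^esub> T' \<otimes>\<^bsub>R'\<^esub> transport (w \<oplus>\<^bsub>R\<^esub> (x1 \<oplus>\<^bsub>R\<^esub> y1))"
    by (simp only: transport_head[OF carry(1) wx1y1])
  have "B.\<iota>\<^sub>p a \<oplus>\<^bsub>R'\<^esub> B.\<iota>\<^sub>p b = transport (A.\<iota>\<^sub>p a \<oplus>\<^bsub>R\<^esub> A.\<iota>\<^sub>p b)"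
    by (rule transport_iota_p_add[OF x(1) y(1), symmetric])
  also have "\<dots> = B.\<iota>\<^sub>p c \<oplus>\<^bsub>R'\<^esub> T' \<otimes>\<^bsub>R'\<^esub> transport w"
    unfolding carry(3) by (rule transport_head[OF carry(1,2)])
  finally have carry': "B.\<iota>\<^sub>p a \<oplus>\<^bsub>R'\<^esub> B.\<iota>\<^sub>p b = B.\<iota>\<^sub>p c \<oplus>\<^bsub>R'\<^esub> T' \<otimes>\<^bsub>R'\<^esub> transport w" .
  have "transport x \<oplus>\<^bsub>R'\<^esub> transport y =
      (B.\<iota>\<^sub>p a \<oplus>\<^bsub>R'\<^esub> B.\<iota>\<^sub>p b) \<oplus>\<^bsub>R'\<^esub> T' \<otimes>\<^bsub>R'\<^esub> (transport x1 \<oplus>\<^bsub>R'\<^esub> transport y1)"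
    unfolding x(3) y(3) transport_head[OF x(1,2)] transport_head[OF y(1,2)]
    using B.iota_p_closed[OF x(1)] B.iota_p_closed[OF y(1)] transport_closed[OF x(2)]
      transport_closed[OF y(2)] B.T_closed by algebra
  then have "transport (x \<oplus>\<^bsub>R\<^esub> y) \<ominus>\<^bsub>R'\<^esub> (transport x \<oplus>\<^bsub>R'\<^esub> transport y) =
      T' \<otimes>\<^bsub>R'\<^esub> ((transport (w \<oplus>\<^bsub>R\<^esub> (x1 \<oplus>\<^bsub>R\<^esub> y1)) \<ominus>\<^bsub>R'\<^esub> (transport w \<oplus>\<^bsub>R'\<^esub> transport (x1 \<oplus>\<^bsub>R\<^esub> y1)))
        \<oplus>\<^bsub>R'\<^esub> (transport (x1 \<oplus>\<^bsub>R\<^esub> y1) \<ominus>\<^bsub>R'\<^esub> (transport x1 \<oplus>\<^bsub>R'\<^esub> transport y1)))"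
    unfolding sum carry'
    using B.iota_p_closed[OF carry(1)] transport_closed[OF carry(2)] transport_closed[OF x(2)]
      transport_closed[OF y(2)] transport_closed[OF x1y1] transport_closed[OF wx1y1] B.T_closed
    by algebra
  then show ?case
    using Suc.IH[OF carry(2) x1y1] Suc.IH[OF x(2) y(2)] by (simp add: B.T_mult_add_in_Jid_Suc)
qed

lemma transport_add: "x \<in> carrier R \<Longrightarrow> y \<in> carrier R \<Longrightarrow> transport (x \<oplus>\<^bsub>R\<^esub> y) = transport x \<oplus>\<^bsub>R'\<^esub> transport y"
  by (rule B.eq_if_diff_in_all_Jid) (simp_all add: transport_closed transport_add_mod_Jid)

lemma transport_mult_mod_Jid:
  "x \<in> carrier R \<Longrightarrow> y \<in> carrier R \<Longrightarrow>
   transport (x \<otimes>\<^bsub>R\<^esub> y) \<ominus>\<^bsub>R'\<^esub> transport x \<otimes>\<^bsub>R'\<^esub> transport y \<in> Jid R' T' m"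
proof (induction m arbitrary: x)
  case 0
  then show ?case
    using transport_closed by (simp add: B.Jid_0)
next
  case (Suc m)
  obtain a x1 where x: "a \<in> roots_plus n" "x1 \<in> carrier R" "x = A.\<iota>\<^sub>p a \<oplus>\<^bsub>R\<^esub> T \<otimes>\<^bsub>R\<^esub> x1"
    using A.head_decomposition[OF Suc.prems(1)] by blast
  have y: "y \<in> carrier R" and x1y: "x1 \<otimes>\<^bsub>R\<^esub> y \<in> carrier R"
    using Suc.prems x by simp_all
  have "x \<otimes>\<^bsub>R\<^esub> y = A.\<iota>\<^sub>p a \<otimes>\<^bsub>R\<^esub> y \<oplus>\<^bsub>R\<^esub> T \<otimes>\<^bsub>R\<^esub> (x1 \<otimes>\<^bsub>R\<^esub> y)"
    unfolding x(3) using A.iota_p_closed[OF x(1)] x(2) y A.T_closed by algebra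
  then have product: "transport (x \<otimes>\<^bsub>R\<^esub> y) =
      B.\<iota>\<^sub>p a \<otimes>\<^bsub>R'\<^esub> transport y \<oplus>\<^bsub>R'\<^esub> T' \<otimes>\<^bsub>R'\<^esub> transport (x1 \<otimes>\<^bsub>R\<^esub> y)"
    using A.iota_p_closed[OF x(1)] x(1) y x1y A.T_closed
    by (simp add: transport_add transport_iota_p_mult transport_T_mult)
  have "transport x = B.\<iota>\<^sub>p a \<oplus>\<^bsub>R'\<^esub> T' \<otimes>\<^bsub>R'\<^esub> transport x1"
    unfolding x(3) by (rule transport_head[OF x(1,2)])
  then have "transport (x \<otimes>\<^bsub>R\<^esub> y) \<ominus>\<^bsub>R'\<^esub> transport x \<otimes>\<^bsub>R'\<^esub> transport y =
      T' \<otimes>\<^bsub>R'\<^esub> (transport (x1 \<otimes>\<^bsub>R\<^esub> y) \<ominus>\<^bsub>R'\<^esub> transport x1 \<otimes>\<^bsub>R'\<^esub> transport y)"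
    unfolding product
    using B.iota_p_closed[OF x(1)] transport_closed[OF y] transport_closed[OF x1y]
      transport_closed[OF x(2)] B.T_closed by algebra
  then show ?case
    using Suc.IH[OF x(2) y] by (simp add: B.T_mult_in_Jid_Suc)
qed

lemma transport_mult: "x \<in> carrier R \<Longrightarrow> y \<in> carrier R \<Longrightarrow> transport (x \<otimes>\<^bsub>R\<^esub> y) = transport x \<otimes>\<^bsub>R'\<^esub> transport y"
  by (rule B.eq_if_diff_in_all_Jid) (simp_all add: transport_closed transport_mult_mod_Jid)

lemma transport_bij: "bij_betw transport (carrier R) (carrier R')"
proof (rule bij_betwI')
  show "transport x = transport y \<longleftrightarrow> x = y" if "x \<in> carrier R" "y \<in> carrier R" for x y
    using that unfolding transport_def by (metis A.digits_closed A.sigma_digits B.digits_sigma)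
  show "transport x \<in> carrier R'" if "x \<in> carrier R" for x
    using that by (rule transport_closed)
  show "\<exists>x \<in> carrier R. z = transport x" if "z \<in> carrier R'" for z
    using that unfolding transport_def
    by (metis A.digits_sigma A.sigma_closed B.digits_closed B.sigma_digits)
qed

lemma transport_ring_iso: "transport \<in> ring_iso R R'"
  by (rule ring_iso_memI) (simp_all add: transport_closed transport_mult transport_add transport_one transport_bij)

lemma transport_T: "transport T = T'"
  using transport_T_mult[of "\<one>\<^bsub>R\<^esub>"] A.T_closed B.T_closed by (simp add: transport_one)

lemma transport_iota:
  assumes "\<xi> \<in> Defs.roots n"
  shows "transport (\<iota> \<xi>) = \<iota>' \<xi>"
proof -
  have "\<xi> \<noteq> 0" "\<xi> \<in> roots_plus n"
    using assms zero_notin_roots[OF A.n_pos] by (auto simp: roots_plus_def)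
  then show ?thesis
    using transport_iota_p[of \<xi>] by simp
qed

end

lemma setting_imp_mu_generator: "n \<ge> 1 \<Longrightarrow> setting n R \<iota> T \<Longrightarrow> mu_generator R T n \<iota>"
  unfolding setting_def is_generator_def
  by (auto intro!: mu_generator.intro adic_filtration.intro adic_filtration_axioms.intro
      mu_generator_axioms.intro cring.axioms)

lemma ring_iso_if_hold_eq:
  assumes "n \<ge> 1" "setting n R \<iota> T" "setting n R' \<iota>' T'"
    and "\<forall>\<xi> \<in> roots n. hold n R' \<iota>' T' \<xi> = hold n R \<iota> T \<xi>"
  shows "\<exists>\<rho>. \<rho> \<in> ring_iso R R' \<and> \<rho> T = T' \<and> (\<forall>\<xi> \<in> roots n. \<rho> (\<iota> \<xi>) = \<iota>' \<xi>)"
proof -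
  interpret mu_generator_pair R T n \<iota> R' T' \<iota>'
    using setting_imp_mu_generator[OF assms(1,2)] setting_imp_mu_generator[OF assms(1,3)] assms(4)
    by (intro mu_generator_pair.intro mu_generator_pair_axioms.intro) simp_all
  show ?thesis
    using transport_ring_iso transport_T transport_iota by blast
qed

theorem proposition5p6:
  fixes n :: nat and R :: "'a ring" and \<iota> :: "complex \<Rightarrow> 'a" and T :: 'a
  assumes "n \<ge> 1"
    and "setting n R \<iota> T"
  shows
    "(\<forall>m. \<forall>z \<in> carrier R. \<exists>a b. a \<in> carrier R \<and> b \<in> Jid R T m \<and> z = a \<oplus>\<^bsub>R\<^esub> b
          \<and> deg_less n R \<iota> T a m \<and>
          (\<forall>a' b'. a' \<in> carrier R \<and> b' \<in> Jid R T m \<and> z = a' \<oplus>\<^bsub>R\<^esub> b'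
              \<and> deg_less n R \<iota> T a' m \<longrightarrow> a' = a \<and> b' = b))
   \<and> (\<forall>m. ring (R Quot Jid R T m) \<and> finite (carrier (R Quot Jid R T m)) \<and>
          bij_betw (\<lambda>\<alpha>. Jid R T m +>\<^bsub>R\<^esub> sigma R \<iota> T \<alpha>)
            {\<alpha> \<in> Pseq n. \<forall>j \<ge> m. \<alpha> j = 0} (carrier (R Quot Jid R T m)))
   \<and> (field (R Quot Jid R T 1) \<and> card (carrier (R Quot Jid R T 1)) = n + 1 \<and>
        bij_betw (\<lambda>\<alpha>. Jid R T 1 +>\<^bsub>R\<^esub> iota_p R \<iota> \<alpha>) (roots_plus n)
          (carrier (R Quot Jid R T 1)) \<and>
        (\<forall>\<alpha> \<in> roots_plus n. \<forall>\<beta> \<in> roots_plus n.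
            iota_p R \<iota> (\<alpha> * \<beta>) = iota_p R \<iota> \<alpha> \<otimes>\<^bsub>R\<^esub> iota_p R \<iota> \<beta>))
   \<and> (canon R T \<in> carrier R \<rightarrow> invlim R T \<and> inj_on (canon R T) (carrier R))
   \<and> (\<forall>(R' :: 'b ring) \<iota>' T'. setting n R' \<iota>' T' \<and>
          (\<forall>\<xi> \<in> roots n. hold n R' \<iota>' T' \<xi> = hold n R \<iota> T \<xi>) \<longrightarrow>
          (\<exists>\<rho>. \<rho> \<in> ring_iso R R' \<and> \<rho> T = T' \<and> (\<forall>\<xi> \<in> roots n. \<rho> (\<iota> \<xi>) = \<iota>' \<xi>)))"
proof -
  interpret mu_generator R T n \<iota>
    using setting_imp_mu_generator assms .
  have "\<forall>(R' :: 'b ring) \<iota>' T'. setting n R' \<iota>' T' \<and>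
      (\<forall>\<xi> \<in> Defs.roots n. hold n R' \<iota>' T' \<xi> = hold n R \<iota> T \<xi>) \<longrightarrow>
      (\<exists>\<rho>. \<rho> \<in> ring_iso R R' \<and> \<rho> T = T' \<and> (\<forall>\<xi> \<in> Defs.roots n. \<rho> (\<iota> \<xi>) = \<iota>' \<xi>))"
    by (intro allI impI, elim conjE) (rule ring_iso_if_hold_eq[OF assms])
  then show ?thesis
    using unique_truncation ideal.quotient_is_ring[OF Jid_ideal] finite_quotient
      bij_Pseq_deg_less_quotient field_quotient_Jid_1 card_quotient_Jid_1 bij_roots_plus_quotient_1
      iota_p_mult canon_in_invlim inj_on_canon
    by (intro conjI) blast+
qed

end
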